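(* Let $(\mathcal{A},\succ,\prec)$ be a finite-dimensional antidendriform algebra with associated antiassociative algebra $(\mathcal{A},\ast)$. Then $(\mathcal{A}\ltimes_{R^*_\prec,L^*_\succ}\mathcal{A}^*,\omega)$, where $\mathcal{A}^*$ carries the zero product, is a double construction of symplectic antiassociative algebra. Conversely, let $(T(\mathcal{A})=\mathcal{A}\oplus\mathcal{A}^*,\ast,\omega)$ be a double construction of symplectic antiassociative algebra such that $\mathcal{A}^*$ is an ideal of $T(\mathcal{A})$. Then the product of $\mathcal{A}^*$ is zero, and $(T(\mathcal{A}),\omega)$ is isomorphic (as double constructions of symplectic antiassociative algebras) to $(\mathcal{A}\ltimes_{R^*_\prec,L^*_\succ}\mathcal{A}^*,\omega)$, where $(\succ,\prec)$ is the antidendriform structure on $\mathcal{A}$ obtained by restricting the one defined on $T(\mathcal{A})$ by $\omega(u\succ v,w)=\omega(v,w\ast u)$, $\omega(u\prec v,w)=\omega(u,v\ast w)$.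
   Context: An antiassociative algebra is a vector space with bilinear product satisfying $(x\ast y)\ast z=-x\ast(y\ast z)$. An antidendriform algebra is a vector space with bilinear products $\prec,\succ$ such that, with $x\ast y=x\prec y+x\succ y$: $(x\prec y)\prec z=-x\prec(y\ast z)$, $(x\succ y)\prec z=-x\succ(y\prec z)$, $x\succ(y\succ z)=-(x\ast y)\succ z$. $R^*_\prec,L^*_\succ:\mathcal{A}\to gl(\mathcal{A}^* )$ are given by $\langle R^*_\prec(x)a^*,y\rangle=\langle y\prec x,a^*\rangle$, $\langle L^*_\succ(x)a^*,y\rangle=\langle x\succ y,a^*\rangle$. $\mathcal{A}\ltimes_{R^*_\prec,L^*_\succ}\mathcal{A}^*$ is $\mathcal{A}\oplus\mathcal{A}^*$ with product $(x+a^* )\ast(y+b^* )=x\ast y+R^*_\prec(x)b^*+L^*_\succ(y)a^*$. A double construction of symplectic antiassociative algebra associated to antiassociative algebras $\mathcal{A}$ and $\mathcal{A}^*$ is an antiassociative product on $\mathcal{A}\oplus\mathcal{A}^*$ with $\mathcal{A},\mathcal{A}^*$ subalgebras and $\omega(x+a^*,y+b^* )=-\langle x,b^*\rangle+\langle a^*,y\rangle$ satisfying $\omega(u\ast v,w)+\omega(v\ast w,u)+\omega(w\ast u,v)=0$. Two such are isomorphic if there is an antiassociative algebra isomorphism $\varphi$ between them mapping $\mathcal{A}_1$ onto $\mathcal{A}_2$, $\mathcal{A}_1^*$ onto $\mathcal{A}_2^*$, with $\omega_1(u,v)=\omega_2(\varphi(u),\varphi(v))$. *)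

theory Defs
  imports "HOL-Analysis.Finite_Cartesian_Product" "HOL-Library.Product_Plus"
begin

text \<open>A finite-dimensional vector space A over a field 'k is modelled in coordinates
as 'k^'n ('n finite); its dual A* is also 'k^'n with the pairing below.
T(A) = A (+) A* is the product type, A = A x {0}, A* = {0} x A*.\<close>

definition pairing :: "'k::field^'n::finite \<Rightarrow> 'k^'n \<Rightarrow> 'k" where
  "pairing x a = (\<Sum>i\<in>UNIV. x $ i * a $ i)"

definition bilin :: "('k::field^'n \<Rightarrow> 'k^'n \<Rightarrow> 'k^'n) \<Rightarrow> bool" where
  "bilin m \<longleftrightarrow>
     (\<forall>x y z. m (x + y) z = m x z + m y z) \<and>
     (\<forall>x y z. m x (y + z) = m x y + m x z) \<and>
     (\<forall>c x y. m (c *s x) y = c *s m x y) \<and>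
     (\<forall>c x y. m x (c *s y) = c *s m x y)"

definition tsc :: "'k::field \<Rightarrow> ('k^'n) \<times> ('k^'n) \<Rightarrow> ('k^'n) \<times> ('k^'n)" where
  "tsc c u = (c *s fst u, c *s snd u)"

definition bilinT :: "(('k::field^'n) \<times> ('k^'n) \<Rightarrow> ('k^'n) \<times> ('k^'n) \<Rightarrow> ('k^'n) \<times> ('k^'n)) \<Rightarrow> bool" where
  "bilinT m \<longleftrightarrow>
     (\<forall>x y z. m (x + y) z = m x z + m y z) \<and>
     (\<forall>x y z. m x (y + z) = m x y + m x z) \<and>
     (\<forall>c x y. m (tsc c x) y = tsc c (m x y)) \<and>
     (\<forall>c x y. m x (tsc c y) = tsc c (m x y))"

definition linearT :: "(('k::field^'n) \<times> ('k^'n) \<Rightarrow> ('k^'n) \<times> ('k^'n)) \<Rightarrow> bool" where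
  "linearT f \<longleftrightarrow> (\<forall>u v. f (u + v) = f u + f v) \<and> (\<forall>c u. f (tsc c u) = tsc c (f u))"

definition antiassoc :: "('a \<Rightarrow> 'a \<Rightarrow> 'a::uminus) \<Rightarrow> bool" where
  "antiassoc m \<longleftrightarrow> (\<forall>x y z. m (m x y) z = - m x (m y z))"

definition antidendriform :: "('k::field^'n \<Rightarrow> 'k^'n \<Rightarrow> 'k^'n) \<Rightarrow> ('k^'n \<Rightarrow> 'k^'n \<Rightarrow> 'k^'n) \<Rightarrow> bool" where
  "antidendriform succ prec \<longleftrightarrow> bilin succ \<and> bilin prec \<and>
     (\<forall>x y z. prec (prec x y) z = - prec x (prec y z + succ y z)) \<and>
     (\<forall>x y z. prec (succ x y) z = - succ x (prec y z)) \<and>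
     (\<forall>x y z. succ x (succ y z) = - succ (prec x y + succ x y) z)"

definition Rstar :: "('k::field^'n::finite \<Rightarrow> 'k^'n \<Rightarrow> 'k^'n) \<Rightarrow> 'k^'n \<Rightarrow> 'k^'n \<Rightarrow> 'k^'n" where
  "Rstar prec x b = (THE c. \<forall>y. pairing y c = pairing (prec y x) b)"

definition Lstar :: "('k::field^'n::finite \<Rightarrow> 'k^'n \<Rightarrow> 'k^'n) \<Rightarrow> 'k^'n \<Rightarrow> 'k^'n \<Rightarrow> 'k^'n" where
  "Lstar succ x a = (THE c. \<forall>y. pairing y c = pairing (succ x y) a)"

definition semidirect :: "('k::field^'n::finite \<Rightarrow> 'k^'n \<Rightarrow> 'k^'n) \<Rightarrow> ('k^'n \<Rightarrow> 'k^'n \<Rightarrow> 'k^'n)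
    \<Rightarrow> ('k^'n) \<times> ('k^'n) \<Rightarrow> ('k^'n) \<times> ('k^'n) \<Rightarrow> ('k^'n) \<times> ('k^'n)" where
  "semidirect succ prec u v =
     (prec (fst u) (fst v) + succ (fst u) (fst v),
      Rstar prec (fst u) (snd v) + Lstar succ (fst v) (snd u))"

definition omega :: "('k::field^'n::finite) \<times> ('k^'n) \<Rightarrow> ('k^'n) \<times> ('k^'n) \<Rightarrow> 'k" where
  "omega u v = - pairing (fst u) (snd v) + pairing (snd u) (fst v)"

definition double_construction ::
  "(('k::field^'n::finite) \<times> ('k^'n) \<Rightarrow> ('k^'n) \<times> ('k^'n) \<Rightarrow> ('k^'n) \<times> ('k^'n))
   \<Rightarrow> ('k^'n \<Rightarrow> 'k^'n \<Rightarrow> 'k^'n) \<Rightarrow> ('k^'n \<Rightarrow> 'k^'n \<Rightarrow> 'k^'n) \<Rightarrow> bool" where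
  "double_construction P mA mD \<longleftrightarrow>
     bilinT P \<and> antiassoc P \<and> antiassoc mA \<and> antiassoc mD \<and>
     (\<forall>x y. P (x, 0) (y, 0) = (mA x y, 0)) \<and>
     (\<forall>a b. P (0, a) (0, b) = (0, mD a b)) \<and>
     (\<forall>u v w. omega (P u v) w + omega (P v w) u + omega (P w u) v = 0)"

definition dc_isomorphic ::
  "(('k::field^'n::finite) \<times> ('k^'n) \<Rightarrow> ('k^'n) \<times> ('k^'n) \<Rightarrow> ('k^'n) \<times> ('k^'n))
   \<Rightarrow> (('k^'n) \<times> ('k^'n) \<Rightarrow> ('k^'n) \<times> ('k^'n) \<Rightarrow> ('k^'n) \<times> ('k^'n)) \<Rightarrow> bool" where
  "dc_isomorphic P Q \<longleftrightarrow> (\<exists>\<phi>. bij \<phi> \<and> linearT \<phi> \<and>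
     (\<forall>u v. \<phi> (P u v) = Q (\<phi> u) (\<phi> v)) \<and>
     \<phi> ` (UNIV \<times> {0}) = UNIV \<times> {0} \<and>
     \<phi> ` ({0} \<times> UNIV) = {0} \<times> UNIV \<and>
     (\<forall>u v. omega u v = omega (\<phi> u) (\<phi> v)))"

definition succT where
  "succT P u v = (THE z. \<forall>w. omega z w = omega v (P w u))"
definition precT where
  "precT P u v = (THE z. \<forall>w. omega z w = omega u (P v w))"

definition succA where "succA P x y = fst (succT P (x, 0) (y, 0))"
definition precA where "precA P x y = fst (precT P (x, 0) (y, 0))"

end

theory Submission
  imports Defs
begin

text \<open>
  In the semidirect product the dual actions \<open>R\<^sup>*\<^sub>\<prec>\<close>, \<open>L\<^sup>*\<^sub>\<succ>\<close> are transposes, so the three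
  antidendriform axioms become, after pairing, exactly the antiassociativity of the mixed
  products, and the cyclicity of \<open>\<omega>\<close> just moves a product across the pairing.
  Conversely, if \<open>A\<^sup>*\<close> is an ideal the product splits as
  \<open>(x + a) \<ast> (y + b) = x \<ast> y + (x \<ast> b + a \<ast> y + a \<ast> b)\<close>. Cyclicity of \<open>\<omega>\<close> on
  \<open>a, b \<in> A\<^sup>*\<close>, \<open>z \<in> A\<close> forces \<open>a \<ast> b = 0\<close>; the products \<open>\<succ>\<close>, \<open>\<prec>\<close> on \<open>A\<close> are transposes of the
  mixed products, cyclicity on \<open>A, A, A\<^sup>*\<close> gives \<open>x \<ast> y = x \<prec> y + x \<succ> y\<close>, and
  antiassociativity on mixed triples gives the antidendriform axioms. Hence \<open>T(A)\<close> is literally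
  the semidirect product and the identity is the isomorphism.
\<close>

lemma pairing_add_left: "pairing (x + y) a = pairing x a + pairing y a"
  by (simp add: pairing_def sum.distrib distrib_right)

lemma pairing_add_right: "pairing x (a + b) = pairing x a + pairing x b"
  by (simp add: pairing_def sum.distrib distrib_left)

lemma pairing_scale_left: "pairing (c *s x) a = c * pairing x a"
  by (simp add: pairing_def sum_distrib_left mult.assoc)

lemma pairing_scale_right: "pairing x (c *s a) = c * pairing x a"
  by (simp add: pairing_def sum_distrib_left mult.left_commute)

lemma pairing_minus_left: "pairing (- x) a = - pairing x a"
  by (simp add: pairing_def sum_negf)

lemma pairing_minus_right: "pairing x (- a) = - pairing x a"
  by (simp add: pairing_def sum_negf)

lemma pairing_zero_left [simp]: "pairing 0 a = 0"
  by (simp add: pairing_def)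

lemma pairing_zero_right [simp]: "pairing x 0 = 0"
  by (simp add: pairing_def)

lemma pairing_commute: "pairing x a = pairing a x"
  by (simp add: pairing_def mult.commute)

lemmas pairing_simps = pairing_add_left pairing_add_right pairing_scale_left
  pairing_scale_right pairing_minus_left pairing_minus_right

lemma pairing_axis: "pairing (axis i 1) a = a $ i"
proof -
  have "pairing (axis i 1) a = (\<Sum>j\<in>UNIV. if j = i then a $ i else 0)"
    unfolding pairing_def axis_def by (rule sum.cong) auto
  then show ?thesis by simp
qed

lemma pairing_eqI_right: "(\<And>y. pairing y a = pairing y b) \<Longrightarrow> a = b"
  by (metis pairing_axis vec_eq_iff)

lemma pairing_eqI_left: "(\<And>y. pairing a y = pairing b y) \<Longrightarrow> a = b"
  by (metis pairing_commute pairing_eqI_right)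

lemma vec_eq_sum_axis: "y = (\<Sum>i\<in>UNIV. y $ i *s axis i (1::'k::field))"
proof -
  have "(\<Sum>i\<in>UNIV. y $ i *s axis i (1::'k)) $ j = y $ j" for j
  proof -
    have "(\<Sum>i\<in>UNIV. y $ i *s axis i (1::'k)) $ j = (\<Sum>i\<in>UNIV. if i = j then y $ j else 0)"
      unfolding sum_component by (rule sum.cong) (auto simp: axis_def)
    then show ?thesis by simp
  qed
  then show ?thesis by (simp add: vec_eq_iff)
qed

lemma linear_functional_pairing:
  fixes g :: "'k::field^'n::finite \<Rightarrow> 'k"
  assumes add: "\<And>y z. g (y + z) = g y + g z" and scale: "\<And>c y. g (c *s y) = c * g y"
  shows "\<exists>a. \<forall>y. pairing y a = g y"
proof (intro exI allI)
  fix y :: "'k^'n"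
  have g_sum: "g (sum f S) = (\<Sum>x\<in>S. g (f x))" for f :: "'n \<Rightarrow> 'k^'n" and S
    using scale[of 0 0] by (induction S rule: infinite_finite_induct) (auto simp: add)
  have "g y = (\<Sum>i\<in>UNIV. y $ i * g (axis i 1))"
    by (subst vec_eq_sum_axis) (simp add: g_sum scale)
  then show "pairing y (\<chi> i. g (axis i 1)) = g y"
    by (simp add: pairing_def)
qed

lemma pairing_THE:
  fixes g :: "'k::field^'n::finite \<Rightarrow> 'k"
  assumes "\<And>y z. g (y + z) = g y + g z" and "\<And>c y. g (c *s y) = c * g y"
  shows "pairing y (THE a. \<forall>y. pairing y a = g y) = g y"
proof -
  have "\<exists>!a. \<forall>y. pairing y a = g y"
    using linear_functional_pairing[OF assms] pairing_eqI_right by metis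
  from theI'[OF this] show ?thesis by blast
qed

lemma THE_pairing_eqI: "(\<And>y. pairing y a = g y) \<Longrightarrow> (THE a. \<forall>y. pairing y a = g y) = a"
  by (rule the_equality) (auto intro: pairing_eqI_right)

lemma omega_Pair [simp]: "omega (x, a) (y, b) = - pairing x b + pairing a y"
  by (simp add: omega_def)

lemma omega_eqI: "(\<And>w. omega z w = omega z' w) \<Longrightarrow> z = z'"
proof -
  assume eq: "\<And>w. omega z w = omega z' w"
  obtain x a x' a' where z: "z = (x, a)" and z': "z' = (x', a')" by fastforce
  have "x = x'" using eq[of "(0, _)"] unfolding z z' by (intro pairing_eqI_left) simp
  moreover have "a = a'" using eq[of "(_, 0)"] unfolding z z' by (intro pairing_eqI_left) simp
  ultimately show ?thesis using z z' by simp
qed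

lemma THE_omega_eqI: "(\<And>w. omega z w = f w) \<Longrightarrow> (THE z. \<forall>w. omega z w = f w) = z"
  by (rule the_equality) (auto intro: omega_eqI)

lemma bilin_simps:
  assumes "bilin m"
  shows "m (x + y) z = m x z + m y z" "m x (y + z) = m x y + m x z"
    "m (c *s x) y = c *s m x y" "m x (c *s y) = c *s m x y"
    "m 0 y = 0" "m x 0 = 0"
  using assms unfolding bilin_def by (metis vector_smult_lzero)+

lemma bilinT_simps:
  assumes "bilinT m"
  shows "m (u + v) w = m u w + m v w" "m u (v + w) = m u v + m u w"
    "m (tsc c u) v = tsc c (m u v)" "m u (tsc c v) = tsc c (m u v)"
  using assms unfolding bilinT_def by blast+

lemma pairing_Rstar:
  assumes "bilin prec"
  shows "pairing y (Rstar prec x b) = pairing (prec y x) b"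
  unfolding Rstar_def
  by (rule pairing_THE) (simp_all add: bilin_simps[OF assms] pairing_simps)

lemma pairing_Lstar:
  assumes "bilin succ"
  shows "pairing y (Lstar succ x a) = pairing (succ x y) a"
  unfolding Lstar_def
  by (rule pairing_THE) (simp_all add: bilin_simps[OF assms] pairing_simps)

lemma Rstar_eqI: "(\<And>y. pairing y c = pairing (prec y x) b) \<Longrightarrow> Rstar prec x b = c"
  unfolding Rstar_def by (rule THE_pairing_eqI)

lemma Lstar_eqI: "(\<And>y. pairing y c = pairing (succ x y) a) \<Longrightarrow> Lstar succ x a = c"
  unfolding Lstar_def by (rule THE_pairing_eqI)

lemma bilin_Rstar:
  assumes "bilin prec"
  shows "bilin (Rstar prec)"
  unfolding bilin_def
  by (intro conjI allI; rule pairing_eqI_right)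
    (simp_all add: pairing_Rstar[OF assms] bilin_simps[OF assms] pairing_simps)

lemma bilin_Lstar:
  assumes "bilin succ"
  shows "bilin (Lstar succ)"
  unfolding bilin_def
  by (intro conjI allI; rule pairing_eqI_right)
    (simp_all add: pairing_Lstar[OF assms] bilin_simps[OF assms] pairing_simps)

context
  fixes succ prec :: "'k::field^'n::finite \<Rightarrow> 'k^'n \<Rightarrow> 'k^'n"
  assumes AD: "antidendriform succ prec"
begin

private lemma bilin_succ: "bilin succ" and bilin_prec: "bilin prec"
  using AD by (simp_all add: antidendriform_def)

private lemmas pairing_dual = pairing_Rstar[OF bilin_prec] pairing_Lstar[OF bilin_succ]

lemma antiassoc_antidendriform_sum: "antiassoc (\<lambda>x y. prec x y + succ x y)"
  using AD by (simp add: antiassoc_def antidendriform_def bilin_simps algebra_simps)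

lemma Rstar_antidendriform_sum: "Rstar prec (prec x y + succ x y) c = - Rstar prec x (Rstar prec y c)"
  using AD by (intro pairing_eqI_right) (simp add: pairing_dual pairing_simps antidendriform_def)

lemma Lstar_Rstar_antidendriform: "Lstar succ z (Rstar prec x b) = - Rstar prec x (Lstar succ z b)"
  using AD by (intro pairing_eqI_right) (simp add: pairing_dual pairing_simps antidendriform_def)

lemma Lstar_antidendriform_sum: "Lstar succ z (Lstar succ y a) = - Lstar succ (prec y z + succ y z) a"
  using AD by (intro pairing_eqI_right) (simp add: pairing_dual pairing_simps antidendriform_def)

end

lemma semidirect_Pair:
  "semidirect succ prec (x, a) (y, b) = (prec x y + succ x y, Rstar prec x b + Lstar succ y a)"
  by (simp add: semidirect_def)

lemma bilinT_semidirect: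
  assumes "bilin succ" "bilin prec"
  shows "bilinT (semidirect succ prec)"
  using bilin_simps[OF assms(1)] bilin_simps[OF assms(2)]
    bilin_simps[OF bilin_Rstar[OF assms(2)]] bilin_simps[OF bilin_Lstar[OF assms(1)]]
  unfolding bilinT_def semidirect_def
  by (auto simp: tsc_def algebra_simps vector_add_ldistrib)

lemma antiassoc_semidirect:
  fixes succ prec :: "'k::field^'n::finite \<Rightarrow> 'k^'n \<Rightarrow> 'k^'n"
  assumes AD: "antidendriform succ prec"
  shows "antiassoc (semidirect succ prec)"
  unfolding antiassoc_def
proof (intro allI)
  fix u v w :: "('k^'n) \<times> ('k^'n)"
  obtain x a y b z c where "u = (x, a)" "v = (y, b)" "w = (z, c)" by (metis prod.exhaust)
  moreover have "bilin succ" "bilin prec" using AD by (simp_all add: antidendriform_def)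
  ultimately show "semidirect succ prec (semidirect succ prec u v) w
      = - semidirect succ prec u (semidirect succ prec v w)"
    using antiassoc_antidendriform_sum[OF AD]
    by (simp add: semidirect_Pair antiassoc_def Rstar_antidendriform_sum[OF AD]
        Lstar_Rstar_antidendriform[OF AD] Lstar_antidendriform_sum[OF AD]
        bilin_simps bilin_Rstar bilin_Lstar)
qed

lemma omega_cyclic_semidirect:
  assumes "bilin succ" "bilin prec"
  shows "omega (semidirect succ prec u v) w + omega (semidirect succ prec v w) u
      + omega (semidirect succ prec w u) v = 0"
proof -
  obtain x a y b z c where "u = (x, a)" "v = (y, b)" "w = (z, c)" by (metis prod.exhaust)
  then show ?thesis
    by (simp add: semidirect_Pair pairing_simps pairing_commute[of "Rstar _ _ _"]
        pairing_commute[of "Lstar _ _ _"] pairing_Rstar[OF assms(2)] pairing_Lstar[OF assms(1)])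
qed

theorem double_construction_semidirect:
  assumes AD: "antidendriform succ prec"
  shows "double_construction (semidirect succ prec) (\<lambda>x y. prec x y + succ x y) (\<lambda>a b. 0)"
proof -
  have bilin: "bilin succ" "bilin prec" using AD by (simp_all add: antidendriform_def)
  have "semidirect succ prec (x, 0) (y, 0) = (prec x y + succ x y, 0)"
    and "semidirect succ prec (0, a) (0, b) = (0, 0)" for x y a b
    using bilin by (simp_all add: semidirect_Pair bilin_simps bilin_Rstar bilin_Lstar)
  then show ?thesis
    unfolding double_construction_def
    using bilinT_semidirect[OF bilin] antiassoc_semidirect[OF AD]
      antiassoc_antidendriform_sum[OF AD] omega_cyclic_semidirect[OF bilin]
    by (simp add: antiassoc_def)
qed

lemma dc_isomorphic_refl: "dc_isomorphic P P"
  unfolding dc_isomorphic_def by (rule exI[of _ id]) (simp add: linearT_def)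

locale dual_ideal_double_construction =
  fixes P :: "('k::field^'n::finite) \<times> ('k^'n) \<Rightarrow> ('k^'n) \<times> ('k^'n) \<Rightarrow> ('k^'n) \<times> ('k^'n)"
    and mA mD :: "'k^'n \<Rightarrow> 'k^'n \<Rightarrow> 'k^'n"
  assumes dc: "double_construction P mA mD"
    and dual_ideal: "\<And>u a. fst (P u (0, a)) = 0" "\<And>u a. fst (P (0, a) u) = 0"
begin

definition mAD :: "'k^'n \<Rightarrow> 'k^'n \<Rightarrow> 'k^'n" where
  "mAD x a = snd (P (x, 0) (0, a))"

definition mDA :: "'k^'n \<Rightarrow> 'k^'n \<Rightarrow> 'k^'n" where
  "mDA a x = snd (P (0, a) (x, 0))"

lemma bilinT_P: "bilinT P" and antiassoc_P: "P (P u v) w = - P u (P v w)"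
  and P_A: "P (x, 0) (y, 0) = (mA x y, 0)" and P_D: "P (0, a) (0, b) = (0, mD a b)"
  and omega_cyclic: "omega (P u v) w + omega (P v w) u + omega (P w u) v = 0"
  using dc unfolding double_construction_def antiassoc_def by blast+

lemmas P_simps = bilinT_simps[OF bilinT_P]

lemma P_A_D: "P (x, 0) (0, a) = (0, mAD x a)"
  and P_D_A: "P (0, a) (x, 0) = (0, mDA a x)"
  using dual_ideal unfolding mAD_def mDA_def by (metis prod.collapse)+

lemma bilin_mAD: "bilin mAD"
  unfolding bilin_def mAD_def
  using P_simps(1)[of "(_, 0)" "(_, 0)" "(0, _)"] P_simps(2)[of "(_, 0)" "(0, _)" "(0, _)"]
    P_simps(3)[where u = "(_, 0)" and v = "(0, _)"] P_simps(4)[where u = "(_, 0)" and v = "(0, _)"]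
  by (simp add: tsc_def)

lemma bilin_mDA: "bilin mDA"
  unfolding bilin_def mDA_def
  using P_simps(1)[of "(0, _)" "(0, _)" "(_, 0)"] P_simps(2)[of "(0, _)" "(_, 0)" "(_, 0)"]
    P_simps(3)[where u = "(0, _)" and v = "(_, 0)"] P_simps(4)[where u = "(0, _)" and v = "(_, 0)"]
  by (simp add: tsc_def)

lemma mD_zero: "mD a b = 0"
proof (rule pairing_eqI_left)
  fix z
  show "pairing (mD a b) z = pairing 0 z"
    using omega_cyclic[of "(0, a)" "(0, b)" "(z, 0)"] by (simp add: P_D P_A_D P_D_A)
qed

lemma P_Pair: "P (x, a) (y, b) = (mA x y, mAD x b + mDA a y)"
proof -
  have "P (x, a) (y, b) = P ((x, 0) + (0, a)) ((y, 0) + (0, b))" by simp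
  also have "\<dots> = P (x, 0) (y, 0) + P (x, 0) (0, b) + (P (0, a) (y, 0) + P (0, a) (0, b))"
    by (simp only: P_simps add_ac)
  finally show ?thesis by (simp add: P_A P_D P_A_D P_D_A mD_zero)
qed

lemma mAD_mA: "mAD (mA x y) c = - mAD x (mAD y c)"
  using antiassoc_P[of "(x, 0)" "(y, 0)" "(0, c)"] by (simp add: P_Pair bilin_simps bilin_mAD bilin_mDA)

lemma mDA_mAD: "mDA (mAD z c) x = - mAD z (mDA c x)"
  using antiassoc_P[of "(z, 0)" "(0, c)" "(x, 0)"] by (simp add: P_Pair bilin_simps bilin_mAD bilin_mDA)

lemma mDA_mA: "mDA (mDA c x) y = - mDA c (mA x y)"
  using antiassoc_P[of "(0, c)" "(x, 0)" "(y, 0)"] by (simp add: P_Pair bilin_simps bilin_mAD bilin_mDA)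

lemma succT_A:
  obtains z where "succT P (x, 0) (y, 0) = (z, 0)" "\<And>c. pairing z c = pairing y (mDA c x)"
proof -
  obtain z where z: "\<forall>c. pairing c z = pairing y (mDA c x)"
    using linear_functional_pairing[of "\<lambda>c. pairing y (mDA c x)"]
    by (auto simp: bilin_simps[OF bilin_mDA] pairing_simps)
  have "succT P (x, 0) (y, 0) = (z, 0)"
    unfolding succT_def using z
    by (intro THE_omega_eqI) (auto simp: P_Pair pairing_commute bilin_simps[OF bilin_mAD])
  with z show thesis by (metis pairing_commute that)
qed

lemma precT_A:
  obtains z where "precT P (x, 0) (y, 0) = (z, 0)" "\<And>c. pairing z c = pairing x (mAD y c)"
proof -
  obtain z where z: "\<forall>c. pairing c z = pairing x (mAD y c)"
    using linear_functional_pairing[of "\<lambda>c. pairing x (mAD y c)"]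
    by (auto simp: bilin_simps[OF bilin_mAD] pairing_simps)
  have "precT P (x, 0) (y, 0) = (z, 0)"
    unfolding precT_def using z
    by (intro THE_omega_eqI) (auto simp: P_Pair pairing_commute bilin_simps[OF bilin_mDA])
  with z show thesis by (metis pairing_commute that)
qed

lemma snd_succT_A: "snd (succT P (x, 0) (y, 0)) = 0"
  and pairing_succA: "pairing (succA P x y) c = pairing y (mDA c x)"
  by (metis succT_A fst_conv snd_conv succA_def)+

lemma snd_precT_A: "snd (precT P (x, 0) (y, 0)) = 0"
  and pairing_precA: "pairing (precA P x y) c = pairing x (mAD y c)"
  by (metis precT_A fst_conv snd_conv precA_def)+

lemma mA_eq_sum: "mA x y = precA P x y + succA P x y"
proof (rule pairing_eqI_left)
  fix c
  have "pairing (mDA c x) y - pairing (mA x y) c + pairing (mAD y c) x = 0"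
    using omega_cyclic[of "(0, c)" "(x, 0)" "(y, 0)"]
    by (simp add: P_Pair bilin_simps bilin_mAD bilin_mDA)
  then show "pairing (mA x y) c = pairing (precA P x y + succA P x y) c"
    using pairing_commute[of "mDA c x" y] pairing_commute[of "mAD y c" x]
    by (simp add: pairing_add_left pairing_precA pairing_succA algebra_simps)
qed

lemma antidendriform_restriction: "antidendriform (succA P) (precA P)"
  unfolding antidendriform_def bilin_def
  by (intro conjI allI; rule pairing_eqI_left)
    (simp_all add: pairing_succA pairing_precA pairing_simps bilin_simps bilin_mAD bilin_mDA
      mAD_mA mDA_mAD mDA_mA mA_eq_sum[symmetric])

lemma Rstar_precA: "Rstar (precA P) x b = mAD x b"
  by (rule Rstar_eqI) (simp add: pairing_precA)

lemma Lstar_succA: "Lstar (succA P) y a = mDA a y"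
  by (rule Lstar_eqI) (simp add: pairing_succA)

lemma P_eq_semidirect: "P = semidirect (succA P) (precA P)"
proof (intro ext)
  fix u v :: "('k^'n) \<times> ('k^'n)"
  obtain x a y b where "u = (x, a)" "v = (y, b)" by (metis prod.exhaust)
  then show "P u v = semidirect (succA P) (precA P) u v"
    by (simp add: P_Pair semidirect_Pair Rstar_precA Lstar_succA mA_eq_sum)
qed

end

theorem mainTheorem15:
  fixes succ prec :: "'k::field_char_0^'n::finite \<Rightarrow> 'k^'n \<Rightarrow> 'k^'n"
    and P :: "('k^'n) \<times> ('k^'n) \<Rightarrow> ('k^'n) \<times> ('k^'n) \<Rightarrow> ('k^'n) \<times> ('k^'n)"
    and mA mD :: "'k^'n \<Rightarrow> 'k^'n \<Rightarrow> 'k^'n"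
  shows "(antidendriform succ prec \<longrightarrow>
           double_construction (semidirect succ prec) (\<lambda>x y. prec x y + succ x y) (\<lambda>a b. 0))
       \<and> ((double_construction P mA mD \<and>
            (\<forall>u a. fst (P u (0, a)) = 0 \<and> fst (P (0, a) u) = 0)) \<longrightarrow>
           (\<forall>a b. mD a b = 0) \<and>
           antidendriform (succA P) (precA P) \<and>
           (\<forall>x y. snd (succT P (x, 0) (y, 0)) = 0 \<and> snd (precT P (x, 0) (y, 0)) = 0) \<and>
           dc_isomorphic P (semidirect (succA P) (precA P)))"
proof (intro conjI impI)
  show "double_construction (semidirect succ prec) (\<lambda>x y. prec x y + succ x y) (\<lambda>a b. 0)"
    if "antidendriform succ prec"
    using that by (rule double_construction_semidirect)
next
  assume "double_construction P mA mD \<and> (\<forall>u a. fst (P u (0, a)) = 0 \<and> fst (P (0, a) u) = 0)"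
  then interpret dual_ideal_double_construction P mA mD
    by unfold_locales blast+
  show "\<forall>a b. mD a b = 0" by (simp add: mD_zero)
  show "antidendriform (succA P) (precA P)" by (rule antidendriform_restriction)
  show "\<forall>x y. snd (succT P (x, 0) (y, 0)) = 0 \<and> snd (precT P (x, 0) (y, 0)) = 0"
    by (simp add: snd_succT_A snd_precT_A)
  show "dc_isomorphic P (semidirect (succA P) (precA P))"
    by (subst (1) P_eq_semidirect) (rule dc_isomorphic_refl)
qed

end
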